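(* Let $D=E[\max(0,v-E[v])]>0$ and let $0<c'\le D$. Put $p_{c'}=c'/D$ and let $G_{c'}$ be the cdf of the distribution placing mass $p_{c'}$ at $E[v]$ and mass $1-p_{c'}$ at $v^{\max}$. Then $U_{\text{coop}}(G_{c'})=c'$ and $U_{\text{heur}}(G_{c'})=0$, so $U_{\text{coop}}(G_{c'})-U_{\text{heur}}(G_{c'})=c'$; hence Mechanism 1 with $G_{c'}$ is truthful for every cost $c<c'$. Moreover, the principal's expected loss (when the agent plays the cooperative strategy) $L_{\text{net}}(G_{c'})=E\big[\int_{[v^{\min},v]}(v-r)\,dG_{c'}(r)\big]$ equals $c'$. More generally, for every $G\in\mathcal{G}$, $L_{\text{net}}(G)=U_{\text{coop}}(G)=E[\widehat G(v)]$.
   Context: $v$ is a random variable supported in $[v^{\min},v^{\max}]$, $0\le v^{\min}<v^{\max}$. $\mathcal{G}$ is the set of cdfs of probability measures on $[v^{\min},v^{\max}]$, $\widehat G(x)=\int_{v^{\min}}^xG(r)\,dr$. Mechanism 1: the principal secretly draws a price $r$ (from $G$, in the limit where the $\epsilon$-uniform perturbation vanishes), the agent bids $b$, and if $b\ge r$ the agent gets the object (common value $v$) and pays $r$. $U_{\text{coop}}(G)=E\big[\sup_{b}\int_{[v^{\min},b]}(v-r)\,dG(r)\big]$, $U_{\text{heur}}(G)=\sup_{b}\int_{[v^{\min},b]}(E[v]-r)\,dG(r)$; Mechanism 1 is truthful for cost $c$ if $U_{\text{coop}}(G)-U_{\text{heur}}(G)>c$. The principal's loss when the object is sold at price $r$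 is $v-r$. *)

theory Defs
  imports "HOL-Probability.Probability"
begin

definition cdf_class :: "real \<Rightarrow> real \<Rightarrow> (real \<Rightarrow> real) set" where
  "cdf_class vmin vmax = {G. \<exists>\<mu>. prob_space \<mu> \<and> sets \<mu> = sets borel \<and>
      measure \<mu> {vmin..vmax} = 1 \<and> G = cdf \<mu>}"

definition payoff :: "(real \<Rightarrow> real) \<Rightarrow> real \<Rightarrow> real \<Rightarrow> real \<Rightarrow> real" where
  "payoff G vmin b w = (LINT r:{vmin..b}|interval_measure G. (w - r))"

definition U_coop :: "'a measure \<Rightarrow> ('a \<Rightarrow> real) \<Rightarrow> real \<Rightarrow> (real \<Rightarrow> real) \<Rightarrow> real" where
  "U_coop M v vmin G = integral\<^sup>L M (\<lambda>x. SUP b. payoff G vmin b (v x))"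

definition U_heur :: "'a measure \<Rightarrow> ('a \<Rightarrow> real) \<Rightarrow> real \<Rightarrow> (real \<Rightarrow> real) \<Rightarrow> real" where
  "U_heur M v vmin G = (SUP b. payoff G vmin b (integral\<^sup>L M v))"

definition truthful :: "'a measure \<Rightarrow> ('a \<Rightarrow> real) \<Rightarrow> real \<Rightarrow> (real \<Rightarrow> real) \<Rightarrow> real \<Rightarrow> bool" where
  "truthful M v vmin G c \<longleftrightarrow> U_coop M v vmin G - U_heur M v vmin G > c"

definition L_net :: "'a measure \<Rightarrow> ('a \<Rightarrow> real) \<Rightarrow> real \<Rightarrow> (real \<Rightarrow> real) \<Rightarrow> real" where
  "L_net M v vmin G = integral\<^sup>L M (\<lambda>x. payoff G vmin (v x) (v x))"

definition Ghat :: "real \<Rightarrow> (real \<Rightarrow> real) \<Rightarrow> real \<Rightarrow> real" where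
  "Ghat vmin G x = (LINT r:{vmin..x}|lborel. G r)"

end

theory Submission
  imports Defs
begin

text \<open>
  Bidding one's own value w is an optimal cooperative bid: every price up to w yields a
  nonnegative surplus w - r and every higher price a negative one. By Fubini the optimal payoff,
  the integral of w - r over [vmin, w] with respect to G, equals the integral of G over
  [vmin, w]; this gives L_net = U_coop = E[Ghat(v)] for every G. For the two-point price
  distribution with mass p = c'/D at E[v] and 1 - p at vmax, the atom at vmax never yields surplus,
  so the cooperative agent gets p * E[max 0 (v - E[v])] = p D = c' and the heuristic agent,
  who values the object at E[v], gets nothing.
\<close>

lemma set_integral_diff_eq_integral_cdf:
  fixes \<mu> :: "real measure"
  assumes "real_distribution \<mu>" and above: "AE r in \<mu>. a \<le> r"
  shows "(LINT r:{a..w}|\<mu>. (w - r)) = (LINT s:{a..w}|lborel. cdf \<mu> s)"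
proof -
  interpret real_distribution \<mu> by fact
  interpret P: pair_sigma_finite \<mu> lborel by intro_locales
  \<comment> \<open>Write w - r as the length of [r, w] and swap the order of integration.\<close>
  define F where "F = (\<lambda>r s. (if a \<le> r \<and> r \<le> s \<and> s \<le> w then 1 else 0 :: ennreal))"
  have F_measurable: "case_prod F \<in> borel_measurable (\<mu> \<Otimes>\<^sub>M lborel)"
    unfolding F_def by measurable
  have integral_s: "(\<integral>\<^sup>+ s. F r s \<partial>lborel) = ennreal (indicator {a..w} r * (w - r))" for r
  proof (cases "a \<le> r \<and> r \<le> w")
    case True
    then have "(\<integral>\<^sup>+ s. F r s \<partial>lborel) = (\<integral>\<^sup>+ s. indicator {r..w} s \<partial>lborel)"
      by (intro nn_integral_cong) (auto simp: F_def indicator_def)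
    with True show ?thesis by simp
  next
    case False
    then have "F r = (\<lambda>_. 0)" by (auto simp: F_def fun_eq_iff)
    with False show ?thesis by (simp add: indicator_def)
  qed
  have integral_r: "(\<integral>\<^sup>+ r. F r s \<partial>\<mu>) = ennreal (indicator {a..w} s * cdf \<mu> s)" for s
  proof (cases "a \<le> s \<and> s \<le> w")
    case True
    then have "(\<integral>\<^sup>+ r. F r s \<partial>\<mu>) = (\<integral>\<^sup>+ r. indicator {a..s} r \<partial>\<mu>)"
      by (intro nn_integral_cong) (auto simp: F_def indicator_def)
    also have "\<dots> = emeasure \<mu> {a..s}" by simp
    also have "\<dots> = emeasure \<mu> {..s}"
      by (rule emeasure_eq_AE) (use above in auto)
    finally show ?thesis
      using True by (simp add: emeasure_eq_measure cdf_def indicator_def)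
  next
    case False
    then have "(\<lambda>r. F r s) = (\<lambda>_. 0)" by (auto simp: F_def fun_eq_iff)
    with False show ?thesis by (auto simp: indicator_def)
  qed
  have cdf_measurable: "cdf \<mu> \<in> borel_measurable borel"
    by (rule borel_measurable_mono) (simp add: mono_def cdf_nondecreasing)
  have "(LINT r:{a..w}|\<mu>. (w - r)) = enn2real (\<integral>\<^sup>+ r. ennreal (indicator {a..w} r * (w - r)) \<partial>\<mu>)"
    unfolding set_lebesgue_integral_def
    by (rule enn2real_nn_integral_eq_integral[symmetric]) (auto simp: indicator_def)
  also have "\<dots> = enn2real (\<integral>\<^sup>+ s. ennreal (indicator {a..w} s * cdf \<mu> s) \<partial>lborel)"
    using P.Fubini'[OF F_measurable] by (simp add: integral_s integral_r)
  also have "\<dots> = (LINT s:{a..w}|lborel. cdf \<mu> s)"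
    unfolding set_lebesgue_integral_def
    using cdf_measurable by (intro enn2real_nn_integral_eq_integral) (auto simp: cdf_nonneg)
  finally show ?thesis .
qed

lemma (in real_distribution) interval_measure_cdf: "interval_measure (cdf M) = M"
proof -
  have "real_distribution (interval_measure (cdf M))"
    by (rule real_distribution_interval_measure)
      (auto simp: cdf_nondecreasing cdf_is_right_cont cdf_lim_at_bot cdf_lim_at_top_prob)
  moreover have "cdf (interval_measure (cdf M)) = cdf M"
    by (rule cdf_interval_measure) (auto simp: cdf_nondecreasing cdf_is_right_cont cdf_lim_at_bot)
  ultimately show ?thesis
    using cdf_unique real_distribution_axioms by blast
qed

lemma cdf_in_cdf_class:
  assumes "real_distribution \<mu>" and "measure \<mu> {vmin..vmax} = 1"
  shows "cdf \<mu> \<in> cdf_class vmin vmax"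
  using assms unfolding cdf_class_def real_distribution_def real_distribution_axioms_def by blast

lemma cdf_classE:
  assumes "G \<in> cdf_class vmin vmax"
  obtains \<mu> where "real_distribution \<mu>" "AE r in \<mu>. r \<in> {vmin..vmax}" "G = cdf \<mu>"
proof -
  obtain \<mu> where "prob_space \<mu>" "sets \<mu> = sets borel" "measure \<mu> {vmin..vmax} = 1" "G = cdf \<mu>"
    using assms unfolding cdf_class_def by blast
  moreover from this have "AE r in \<mu>. r \<in> {vmin..vmax}"
    by (intro prob_space.AE_prob_1) simp_all
  ultimately show thesis
    using that by (simp add: real_distribution_def real_distribution_axioms_def)
qed

lemma payoff_cdf:
  assumes "real_distribution \<mu>"
  shows "payoff (cdf \<mu>) a b w = (LINT r:{a..b}|\<mu>. (w - r))"
  unfolding payoff_def real_distribution.interval_measure_cdf[OF assms] ..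

lemma SUP_payoff_eq_payoff_self:
  assumes "G \<in> cdf_class vmin vmax"
  shows "(SUP b. payoff G vmin b w) = payoff G vmin w w"
proof -
  obtain \<mu> where \<mu>: "real_distribution \<mu>" "AE r in \<mu>. r \<in> {vmin..vmax}" "G = cdf \<mu>"
    using cdf_classE[OF assms] by blast
  then interpret real_distribution \<mu> by simp
  have integrable: "integrable \<mu> (\<lambda>r. indicator {vmin..b} r * (w - r))" for b
    by (rule integrable_const_bound[where B="\<bar>w\<bar> + \<bar>vmin\<bar> + \<bar>vmax\<bar>"])
      (use \<mu>(2) in \<open>auto simp: indicator_def\<close>)
  have "payoff G vmin b w \<le> payoff G vmin w w" for b
    unfolding \<mu>(3) payoff_cdf[OF \<mu>(1)] set_lebesgue_integral_def
    using integrable by (intro integral_mono) (auto simp: indicator_def)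
  then show ?thesis
    by (intro cSup_eq_maximum) auto
qed

lemma payoff_self_eq_Ghat:
  assumes "G \<in> cdf_class vmin vmax"
  shows "payoff G vmin w w = Ghat vmin G w"
proof -
  obtain \<mu> where \<mu>: "real_distribution \<mu>" "AE r in \<mu>. r \<in> {vmin..vmax}" "G = cdf \<mu>"
    using cdf_classE[OF assms] by blast
  have "AE r in \<mu>. vmin \<le> r"
    using \<mu>(2) by eventually_elim simp
  then show ?thesis
    unfolding Ghat_def \<mu>(3) payoff_cdf[OF \<mu>(1)]
    using set_integral_diff_eq_integral_cdf[OF \<mu>(1)] by blast
qed

lemma L_net_eq_U_coop:
  assumes "G \<in> cdf_class vmin vmax"
  shows "L_net M v vmin G = U_coop M v vmin G"
  unfolding L_net_def U_coop_def SUP_payoff_eq_payoff_self[OF assms] ..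

lemma U_coop_eq_integral_Ghat:
  assumes "G \<in> cdf_class vmin vmax"
  shows "U_coop M v vmin G = integral\<^sup>L M (\<lambda>x. Ghat vmin G (v x))"
  unfolding U_coop_def SUP_payoff_eq_payoff_self[OF assms] payoff_self_eq_Ghat[OF assms] ..

lemma U_heur_eq_payoff_mean:
  assumes "G \<in> cdf_class vmin vmax"
  shows "U_heur M v vmin G = payoff G vmin (integral\<^sup>L M v) (integral\<^sup>L M v)"
  unfolding U_heur_def SUP_payoff_eq_payoff_self[OF assms] ..

definition two_point_distr :: "real \<Rightarrow> real \<Rightarrow> real \<Rightarrow> real measure" where
  "two_point_distr p a b = distr (measure_pmf (bernoulli_pmf p)) borel (\<lambda>t. if t then a else b)"

context
  fixes p :: real
  assumes p: "0 \<le> p" "p \<le> 1"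
begin

lemma real_distribution_two_point_distr: "real_distribution (two_point_distr p a b)"
proof -
  have "prob_space (two_point_distr p a b)"
    unfolding two_point_distr_def by (rule measure_pmf.prob_space_distr) simp
  then show ?thesis
    by (simp add: real_distribution_def real_distribution_axioms_def two_point_distr_def)
qed

lemma measure_two_point_distr:
  assumes "S \<in> sets borel"
  shows "measure (two_point_distr p a b) S = indicator S a * p + indicator S b * (1 - p)"
proof -
  let ?f = "\<lambda>t. if t then a else b"
  have "measure (two_point_distr p a b) S = measure (measure_pmf (bernoulli_pmf p)) (?f -` S)"
    unfolding two_point_distr_def using assms by (simp add: measure_distr)
  also have "\<dots> = sum (pmf (bernoulli_pmf p)) (?f -` S)"
    by (rule measure_measure_pmf_finite) simp
  also have "?f -` S = (if a \<in> S then {True} else {}) \<union> (if b \<in> S then {False} else {})"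
    by (auto split: if_splits)
  finally show ?thesis
    using p by (cases "a \<in> S"; cases "b \<in> S") auto
qed

lemma cdf_two_point_distr:
  "cdf (two_point_distr p a b) = (\<lambda>x. (if a \<le> x then p else 0) + (if b \<le> x then 1 - p else 0))"
  unfolding cdf_def fun_eq_iff by (simp add: measure_two_point_distr indicator_def)

lemma integral_two_point_distr:
  assumes "f \<in> borel_measurable borel"
  shows "integral\<^sup>L (two_point_distr p a b) f = p * f a + (1 - p) * f b"
  unfolding two_point_distr_def using assms p by (subst integral_distr) simp_all

lemma payoff_two_point_distr_self:
  assumes "vmin \<le> a" and "a \<le> b"
  shows "payoff (cdf (two_point_distr p a b)) vmin w w = p * max 0 (w - a) + (1 - p) * max 0 (w - b)"
  unfolding payoff_cdf[OF real_distribution_two_point_distr] set_lebesgue_integral_def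
  using assms by (subst integral_two_point_distr) (auto simp: indicator_def)

lemma cdf_two_point_distr_in_cdf_class:
  assumes "vmin \<le> a" and "a \<le> b"
  shows "cdf (two_point_distr p a b) \<in> cdf_class vmin b"
  using assms
  by (intro cdf_in_cdf_class real_distribution_two_point_distr)
    (simp add: measure_two_point_distr indicator_def)

lemma U_coop_two_point_distr:
  assumes [measurable]: "v \<in> borel_measurable M"
    and "AE x in M. v x \<le> b" and "vmin \<le> a" and "a \<le> b"
  shows "U_coop M v vmin (cdf (two_point_distr p a b)) = p * integral\<^sup>L M (\<lambda>x. max 0 (v x - a))"
proof -
  have "U_coop M v vmin (cdf (two_point_distr p a b))
      = integral\<^sup>L M (\<lambda>x. p * max 0 (v x - a) + (1 - p) * max 0 (v x - b))"
    unfolding U_coop_def SUP_payoff_eq_payoff_self[OF cdf_two_point_distr_in_cdf_class[OF assms(3,4)]]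
    using assms(3,4) by (simp add: payoff_two_point_distr_self)
  also have "\<dots> = integral\<^sup>L M (\<lambda>x. p * max 0 (v x - a))"
  proof (rule integral_cong_AE)
    show "AE x in M. p * max 0 (v x - a) + (1 - p) * max 0 (v x - b) = p * max 0 (v x - a)"
      using assms(2) by eventually_elim simp
  qed simp_all
  finally show ?thesis by simp
qed

end

theorem mainTheorem5:
  fixes M :: "'a measure" and v :: "'a \<Rightarrow> real" and vmin vmax D c' :: real
    and Gc :: "real \<Rightarrow> real"
  assumes "prob_space M"
    and "v \<in> borel_measurable M"
    and "AE x in M. v x \<in> {vmin..vmax}"
    and "0 \<le> vmin" and "vmin < vmax"
    and D_def: "D = integral\<^sup>L M (\<lambda>x. max 0 (v x - integral\<^sup>L M v))"
    and "D > 0" and "0 < c'" and "c' \<le> D"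
    and Gc_def: "Gc = (\<lambda>x. (if integral\<^sup>L M v \<le> x then c' / D else 0)
                        + (if vmax \<le> x then 1 - c' / D else 0))"
  shows "Gc \<in> cdf_class vmin vmax
    \<and> U_coop M v vmin Gc = c'
    \<and> U_heur M v vmin Gc = 0
    \<and> U_coop M v vmin Gc - U_heur M v vmin Gc = c'
    \<and> (\<forall>c < c'. truthful M v vmin Gc c)
    \<and> L_net M v vmin Gc = c'
    \<and> (\<forall>G \<in> cdf_class vmin vmax.
         L_net M v vmin G = U_coop M v vmin G
         \<and> U_coop M v vmin G = integral\<^sup>L M (\<lambda>x. Ghat vmin G (v x)))"
proof -
  interpret prob_space M by fact
  define m where "m = integral\<^sup>L M v"
  define p where "p = c' / D"
  have p: "0 \<le> p" "p \<le> 1"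
    using assms(7-9) by (auto simp: p_def field_simps)
  have "integrable M v"
    by (rule integrable_const_bound[where B="\<bar>vmin\<bar> + \<bar>vmax\<bar>"]) (use assms(2,3) in auto)
  with assms(3) have m: "vmin \<le> m" "m \<le> vmax"
    unfolding m_def by (auto intro!: integral_ge_const integral_le_const elim: AE_mp)
  have Gc: "Gc = cdf (two_point_distr p m vmax)"
    unfolding cdf_two_point_distr[OF p] unfolding Gc_def m_def p_def ..
  have Gc_in_class: "Gc \<in> cdf_class vmin vmax"
    unfolding Gc using cdf_two_point_distr_in_cdf_class[OF p m] .
  have "AE x in M. v x \<le> vmax"
    using assms(3) by eventually_elim simp
  then have "U_coop M v vmin Gc = p * D"
    unfolding Gc D_def m_def[symmetric] using U_coop_two_point_distr[OF p assms(2) _ m] by blast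
  then have U_coop: "U_coop M v vmin Gc = c'"
    using assms(7) by (simp add: p_def)
  have U_heur: "U_heur M v vmin Gc = 0"
    unfolding U_heur_eq_payoff_mean[OF Gc_in_class] m_def[symmetric]
    using m by (simp add: Gc payoff_two_point_distr_self[OF p])
  show ?thesis
    using Gc_in_class U_coop U_heur L_net_eq_U_coop U_coop_eq_integral_Ghat
    by (auto simp: truthful_def)
qed

end
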